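(* Let $A\subseteq\mathbb{F}_2^n\setminus\{0\}$ have size $q$, and let $a=\lceil\log(q+1)\rceil$. Then $A$ contains at least \[ \prod_{j=0}^{a-1}(q+1-2^j) \] ordered linearly independent $a$-tuples (i.e., tuples $(v_1,\dots,v_a)\in A^a$ with $v_1,\dots,v_a$ linearly independent over $\mathbb{F}_2$).
   Context: $\log$ denotes the base-$2$ logarithm. *)

theory Defs
  imports "HOL-Analysis.Analysis" "HOL-Library.Z2"
begin

text \<open>Vectors of F_2^n are modelled as bit ^ 'n; linear independence over F_2 is the
library notion vec.independent for the F_2-vector space structure given by scalar multiplication.\<close>

definition indep_tuples :: "(bit ^ 'n) set \<Rightarrow> nat \<Rightarrow> (bit ^ 'n) list set" where
  "indep_tuples A k = {vs. length vs = k \<and> set vs \<subseteq> A \<and> distinct vs \<and> vec.independent (set vs)}"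

end

theory Submission
  imports Defs
begin

text \<open>Build ordered independent tuples one vector at a time. An independent \<open>k\<close>-tuple spans
  at most \<open>2\<^sup>k\<close> vectors, at most \<open>2\<^sup>k - 1\<close> of which are nonzero and hence possibly in \<open>A\<close>; so
  it can be prolonged by at least \<open>q + 1 - 2\<^sup>k\<close> vectors of \<open>A\<close>, and the extensions of distinct
  tuples are distinct. As long as \<open>2\<^sup>j < q + 1\<close>, which holds for all \<open>j < \<lceil>log (q + 1)\<rceil>\<close>, these
  factors are positive and the bounds multiply.\<close>

lemma UNIV_bit: "(UNIV :: bit set) = {0, 1}"
  by (auto intro: bit.exhaust)

instance bit :: finite
  by standard (simp add: UNIV_bit)

lemma card_UNIV_bit: "CARD(bit) = 2"
  by (simp add: UNIV_bit)

lemma card_vec_span_le: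
  fixes S :: "('a::{field,finite} ^ 'n) set"
  assumes "finite S"
  shows "card (vec.span S) \<le> CARD('a) ^ card S"
  using assms
proof (induction S rule: finite_induct)
  case empty
  then show ?case by (simp add: vec.span_empty)
next
  case (insert a S)
  have "vec.span (insert a S) \<subseteq> (\<lambda>(k, y). k *s a + y) ` (UNIV \<times> vec.span S)"
  proof
    fix x assume "x \<in> vec.span (insert a S)"
    then obtain k where "x - k *s a \<in> vec.span S" by (auto simp: vec.span_insert)
    then show "x \<in> (\<lambda>(k, y). k *s a + y) ` (UNIV \<times> vec.span S)"
      by (intro image_eqI[where x = "(k, x - k *s a)"]) auto
  qed
  then have "card (vec.span (insert a S)) \<le> card ((\<lambda>(k, y). k *s a + y) ` (UNIV \<times> vec.span S))"
    by (intro card_mono) simp_all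
  also have "\<dots> \<le> card ((UNIV :: 'a set) \<times> vec.span S)"
    by (rule card_image_le) simp
  also have "\<dots> = CARD('a) * card (vec.span S)"
    by (simp add: card_cartesian_product)
  also have "\<dots> \<le> CARD('a) * CARD('a) ^ card S"
    using insert.IH by simp
  finally show ?case
    using insert.hyps by simp
qed

lemma finite_indep_tuples: "finite (indep_tuples A k)"
proof (rule finite_subset)
  show "indep_tuples A k \<subseteq> {vs. set vs \<subseteq> UNIV \<and> length vs = k}"
    unfolding indep_tuples_def by auto
qed (rule finite_lists_length_eq, simp)

lemma indep_tuples_0: "indep_tuples A 0 = {[]}"
  unfolding indep_tuples_def by (auto simp: vec.independent_empty)

lemma Cons_in_indep_tuples_Suc:
  assumes "vs \<in> indep_tuples A k" and "v \<in> A" and "v \<notin> vec.span (set vs)"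
  shows "v # vs \<in> indep_tuples A (Suc k)"
proof -
  have "v \<notin> set vs"
    using assms(3) vec.span_base by blast
  then show ?thesis
    using assms unfolding indep_tuples_def by (auto simp: vec.independent_insert)
qed

lemma card_diff_span_indep_tuple_ge:
  assumes "0 \<notin> A" and "vs \<in> indep_tuples A k"
  shows "int (card A) + 1 - 2 ^ k \<le> int (card (A - vec.span (set vs)))"
proof -
  let ?V = "vec.span (set vs)"
  have "card (set vs) = k"
    using assms(2) unfolding indep_tuples_def by (auto simp: distinct_card)
  then have "card ?V \<le> 2 ^ k"
    using card_vec_span_le[of "set vs"] by (simp add: card_UNIV_bit)
  moreover have "card (A \<inter> ?V) \<le> card (?V - {0})"
    using assms(1) by (intro card_mono) auto
  moreover have "card (?V - {0}) = card ?V - 1"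
    by (simp add: vec.span_zero)
  moreover have "card ?V \<ge> 1"
    using vec.span_zero[of "set vs"] by (metis One_nat_def Suc_leI card_gt_0_iff empty_iff finite)
  moreover have "card (A - ?V) + card (A \<inter> ?V) = card A"
    using card_Int_Diff[of A ?V] by simp
  ultimately have "card A + 1 \<le> card (A - ?V) + 2 ^ k"
    by linarith
  then have "int (card A + 1) \<le> int (card (A - ?V) + 2 ^ k)"
    by (simp only: of_nat_le_iff)
  then show ?thesis
    unfolding of_nat_add of_nat_power of_nat_numeral of_nat_1 by linarith
qed

lemma card_indep_tuples_Suc_ge:
  assumes "0 \<notin> A"
  shows "int (card (indep_tuples A k)) * (int (card A) + 1 - 2 ^ k)
           \<le> int (card (indep_tuples A (Suc k)))"
proof -
  let ?T = "indep_tuples A k"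
  let ?ext = "\<lambda>vs. (\<lambda>v. v # vs) ` (A - vec.span (set vs))"
  have card_Union_ext: "card (\<Union>vs\<in>?T. ?ext vs) = (\<Sum>vs\<in>?T. card (?ext vs))"
    by (rule card_UN_disjoint) (auto simp: finite_indep_tuples)
  have Union_ext_subset: "(\<Union>vs\<in>?T. ?ext vs) \<subseteq> indep_tuples A (Suc k)"
    using Cons_in_indep_tuples_Suc by blast
  have "int (card ?T) * (int (card A) + 1 - 2 ^ k) = (\<Sum>vs\<in>?T. int (card A) + 1 - 2 ^ k)"
    by simp
  also have "\<dots> \<le> (\<Sum>vs\<in>?T. int (card (A - vec.span (set vs))))"
    using card_diff_span_indep_tuple_ge[OF assms] by (intro sum_mono) blast
  also have "\<dots> = int (card (\<Union>vs\<in>?T. ?ext vs))"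
    by (simp add: card_Union_ext card_image inj_on_def)
  also have "\<dots> \<le> int (card (indep_tuples A (Suc k)))"
    using Union_ext_subset by (simp add: card_mono finite_indep_tuples)
  finally show ?thesis .
qed

lemma prod_le_card_indep_tuples:
  assumes "0 \<notin> A" and "2 ^ (k - 1) \<le> card A + 1"
  shows "(\<Prod>j<k. int (card A) + 1 - 2 ^ j) \<le> int (card (indep_tuples A k))"
  using assms(2)
proof (induction k)
  case 0
  then show ?case by (simp add: indep_tuples_0)
next
  case (Suc k)
  have "2 ^ k \<le> card A + 1"
    using Suc.prems by simp
  then have IH: "(\<Prod>j<k. int (card A) + 1 - 2 ^ j) \<le> int (card (indep_tuples A k))"
    by (intro Suc.IH) (meson diff_le_self le_trans one_le_numeral power_increasing)
  have "int (2 ^ k) \<le> int (card A + 1)"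
    using \<open>2 ^ k \<le> card A + 1\<close> by (simp only: of_nat_le_iff)
  then have "0 \<le> int (card A) + 1 - 2 ^ k"
    unfolding of_nat_add of_nat_power of_nat_numeral of_nat_1 by linarith
  then have "(\<Prod>j<Suc k. int (card A) + 1 - 2 ^ j)
               \<le> int (card (indep_tuples A k)) * (int (card A) + 1 - 2 ^ k)"
    using IH by (simp add: mult_right_mono)
  also have "\<dots> \<le> int (card (indep_tuples A (Suc k)))"
    by (rule card_indep_tuples_Suc_ge[OF assms(1)])
  finally show ?case .
qed

lemma power_less_of_less_ceiling_log:
  fixes b x :: real
  assumes "1 < b" and "0 < x" and "j < nat \<lceil>log b x\<rceil>"
  shows "b ^ j < x"
proof -
  have "real j < log b x"
    using assms(3) by linarith
  then show ?thesis
    using assms(1,2) by (simp add: less_log_iff powr_realpow)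
qed

theorem lemma2p1:
  fixes A :: "(bit ^ 'n) set" and q :: nat
  assumes "A \<subseteq> UNIV - {0}" and "card A = q"
  shows "(\<Prod>j<nat \<lceil>log 2 (real q + 1)\<rceil>. (int q + 1 - 2 ^ j))
           \<le> int (card (indep_tuples A (nat \<lceil>log 2 (real q + 1)\<rceil>)))"
proof -
  let ?a = "nat \<lceil>log 2 (real q + 1)\<rceil>"
  have "2 ^ (?a - 1) \<le> q + 1"
  proof (cases "?a = 0")
    case False
    then have "real (2 ^ (?a - 1)) < real (q + 1)"
      using power_less_of_less_ceiling_log[of 2 "real q + 1" "?a - 1"] by simp
    then show ?thesis
      by (simp only: of_nat_less_iff less_imp_le)
  qed simp
  moreover have "0 \<notin> A"
    using assms(1) by blast
  ultimately show ?thesis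
    using prod_le_card_indep_tuples[of A ?a] assms(2) by simp
qed

end
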